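(* Let $p>2$ be a prime and $d>0$ an integer. Suppose $-1\in QR_p$ and $\epsilon\in QNR_p$, where $\epsilon\in\mathbb{Z}_p^*$ satisfies $\epsilon^2\equiv-1\pmod p$. Let $n_1$ be the number of distinct values $y^4\in\mathbb{Z}_p^*$ for which $y^4-1\equiv x^2\pmod p$ has a solution with $x^2\in\mathbb{Z}_p^*$, and let $n_2$ be the number of distinct values $y^4\in\mathbb{Z}_p^*$ for which $y^4+1\equiv x^2\pmod p$ has a solution with $x^2\in\mathbb{Z}_p^*$. Then $$n_1+n_2=\frac{p-5}{4}.$$
   Context: $\mathbb{Z}_p^*=\{1,\dots,p-1\}$ is the multiplicative group modulo $p$. $QR_p=\{x\in\mathbb{Z}_p^*: \exists y\in\mathbb{Z}_p^*,\ y^2\equiv x \pmod p\}$ is the set of nonzero quadratic residues modulo $p$ and $QNR_p=\mathbb{Z}_p^*\setminus QR_p$ the set of quadratic nonresidues. *)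

theory Defs
  imports Complex_Main "HOL-Number_Theory.Number_Theory"
begin

text \<open>Z_p^* is represented by the residues {1..p-1} (as integers).\<close>

definition QR :: "int \<Rightarrow> int set" where
  "QR p = {x \<in> {1..p-1}. \<exists>y\<in>{1..p-1}. [y^2 = x] (mod p)}"

definition QNR :: "int \<Rightarrow> int set" where
  "QNR p = {1..p-1} - QR p"

definition n1 :: "int \<Rightarrow> nat" where
  "n1 p = card {t \<in> {1..p-1}. (\<exists>y\<in>{1..p-1}. [y^4 = t] (mod p)) \<and>
       (\<exists>x. x^2 mod p \<in> {1..p-1} \<and> [t - 1 = x^2] (mod p))}"

definition n2 :: "int \<Rightarrow> nat" where
  "n2 p = card {t \<in> {1..p-1}. (\<exists>y\<in>{1..p-1}. [y^4 = t] (mod p)) \<and>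
       (\<exists>x. x^2 mod p \<in> {1..p-1} \<and> [t + 1 = x^2] (mod p))}"

end

theory Submission
  imports Defs
begin

text \<open>
  Count the points of the conic \<open>x\<^sup>2 - y\<^sup>2 = 1\<close> over \<open>\<int>/p\<close> with both coordinates
  nonzero in two ways. Parametrised by \<open>u = x + y\<close> the conic has \<open>p - 1\<close> points, four of
  which lie on the axes because \<open>-1\<close> is a square; so \<open>p - 5\<close> remain. On the other hand
  these points lie four apiece over the \<open>s = x\<^sup>2\<close> for which \<open>s\<close> and \<open>s - 1\<close> are both
  nonzero squares. Since \<open>-1\<close> is a square but not a fourth power, every nonzero square is
  \<open>t\<close> or \<open>-t\<close> for a fourth power \<open>t\<close>, but never both; the condition on \<open>s - 1\<close> then
  becomes \<open>t - 1\<close>, resp.\ \<open>t + 1\<close>, being a nonzero square, so there are \<open>n\<^sub>1 + n\<^sub>2\<close> such \<open>s\<close>.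
\<close>

definition square_roots :: "int \<Rightarrow> int \<Rightarrow> int set" where
  "square_roots p a = {x \<in> {1..p-1}. [x^2 = a] (mod p)}"

definition hyperbola :: "int \<Rightarrow> int \<Rightarrow> (int \<times> int) set" where
  "hyperbola p c = {(x, y). x \<in> {0..p-1} \<and> y \<in> {0..p-1} \<and> [x^2 - y^2 = c] (mod p)}"

definition hyperbola_units :: "int \<Rightarrow> (int \<times> int) set" where
  "hyperbola_units p = hyperbola p 1 \<inter> {1..p-1} \<times> {1..p-1}"

definition consecutive_residues :: "int \<Rightarrow> int set" where
  "consecutive_residues p = {s \<in> {1..p-1}. Legendre s p = 1 \<and> Legendre (s - 1) p = 1}"

definition fourth_power :: "int \<Rightarrow> int \<Rightarrow> bool" where
  "fourth_power p t \<longleftrightarrow> (\<exists>y \<in> {1..p-1}. [y^4 = t] (mod p))"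

context
  fixes p :: int
  assumes prime_p: "prime p" and p_gt_2: "p > 2"
begin

lemma not_dvd_if_in_units: "x \<in> {1..p-1} \<Longrightarrow> \<not> p dvd x"
  using zdvd_imp_le by fastforce

lemma mod_in_units: "\<not> p dvd x \<Longrightarrow> x mod p \<in> {1..p-1}"
proof -
  assume "\<not> p dvd x"
  then have "x mod p \<noteq> 0" by (simp add: dvd_eq_mod_eq_0)
  moreover have "0 \<le> x mod p" "x mod p < p" using p_gt_2 by auto
  ultimately show ?thesis by auto
qed

lemma not_dvd_power: "\<not> p dvd x \<Longrightarrow> \<not> p dvd x ^ n"
  using prime_p prime_dvd_power by blast

lemma cong_double_imp_cong: "[2 * x = 2 * y] (mod p) \<Longrightarrow> [x = y] (mod p)"
  using prime_odd_int[OF prime_p p_gt_2] cong_mult_lcancel[of 2 p] by simp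

lemma cong_square_square_imp: "[x^2 = a^2] (mod p) \<Longrightarrow> [x = a] (mod p) \<or> [x = -a] (mod p)"
proof -
  assume "[x^2 = a^2] (mod p)"
  then have "p dvd (x - a) * (x + a)"
    by (simp add: cong_iff_dvd_diff power2_eq_square algebra_simps)
  then show ?thesis
    using prime_p by (auto simp: prime_dvd_mult_iff cong_iff_dvd_diff)
qed

lemma Legendre_cong:
  assumes "[a = b] (mod p)"
  shows "Legendre a p = Legendre b p"
proof -
  have "[a = 0] (mod p) \<longleftrightarrow> [b = 0] (mod p)" "QuadRes p a \<longleftrightarrow> QuadRes p b"
    unfolding QuadRes_def using assms cong_sym cong_trans by blast+
  then show ?thesis
    unfolding Legendre_def by simp
qed

lemma Legendre_eq_1_iff: "Legendre a p = 1 \<longleftrightarrow> \<not> p dvd a \<and> QuadRes p a"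
  unfolding Legendre_def by (auto simp: cong_0_iff)

lemma Legendre_nonzero_cases: "\<not> p dvd a \<Longrightarrow> Legendre a p = 1 \<or> Legendre a p = -1"
  unfolding Legendre_def by (auto simp: cong_0_iff)

lemma Legendre_mult: "Legendre (a * b) p = Legendre a p * Legendre b p"
proof -
  define q where "q = nat p"
  have q: "p = int q" and "prime q" "2 < q"
    using prime_p p_gt_2 by (simp_all add: q_def)
  note euler = euler_criterion[OF \<open>prime q\<close> \<open>2 < q\<close>, folded q]
  have "[Legendre (a * b) p = a ^ ((q - 1) div 2) * b ^ ((q - 1) div 2)] (mod p)"
    using euler[of "a * b"] by (simp add: power_mult_distrib)
  also have "[a ^ ((q - 1) div 2) * b ^ ((q - 1) div 2) = Legendre a p * Legendre b p] (mod p)"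
    by (rule cong_mult[OF cong_sym[OF euler] cong_sym[OF euler]])
  finally have "[Legendre (a * b) p + 1 = Legendre a p * Legendre b p + 1] (mod p)"
    by (rule cong_add) simp
  moreover have "Legendre (a * b) p \<in> {-1, 0, 1}" "Legendre a p * Legendre b p \<in> {-1, 0, 1}"
    unfolding Legendre_def by auto
  ultimately have "Legendre (a * b) p + 1 = Legendre a p * Legendre b p + 1"
    using p_gt_2 by (intro cong_less_imp_eq_int) auto
  then show ?thesis by simp
qed

lemma Legendre_square: "\<not> p dvd a \<Longrightarrow> Legendre (a^2) p = 1"
  unfolding Legendre_eq_1_iff QuadRes_def using not_dvd_power[of a 2] cong_refl by blast

lemma Legendre_eq_1_imp_unit_root:
  assumes "Legendre a p = 1"
  obtains y where "y \<in> {1..p-1}" "[y^2 = a] (mod p)"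
proof -
  obtain r where r: "[r^2 = a] (mod p)" and "\<not> p dvd a"
    using assms unfolding Legendre_eq_1_iff QuadRes_def by blast
  then have "\<not> p dvd r^2"
    using cong_dvd_iff[OF r] by simp
  then have "\<not> p dvd r"
    by (auto simp: power2_eq_square)
  moreover have "[(r mod p)^2 = a] (mod p)"
    using cong_trans[OF _ r] by (simp add: cong_def power_mod)
  ultimately show thesis
    by (intro that[of "r mod p"] mod_in_units)
qed

lemma QR_iff_Legendre: "x \<in> QR p \<longleftrightarrow> x \<in> {1..p-1} \<and> Legendre x p = 1"
proof
  assume "x \<in> QR p"
  then show "x \<in> {1..p-1} \<and> Legendre x p = 1"
    unfolding QR_def Legendre_eq_1_iff QuadRes_def using not_dvd_if_in_units by blast
next
  assume "x \<in> {1..p-1} \<and> Legendre x p = 1"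
  then show "x \<in> QR p"
    unfolding QR_def by (blast elim: Legendre_eq_1_imp_unit_root)
qed

lemma nonzero_square_cong_iff_Legendre:
  "(\<exists>x. x^2 mod p \<in> {1..p-1} \<and> [a = x^2] (mod p)) \<longleftrightarrow> Legendre a p = 1"
proof
  assume "\<exists>x. x^2 mod p \<in> {1..p-1} \<and> [a = x^2] (mod p)"
  then obtain x where "x^2 mod p \<in> {1..p-1}" "[a = x^2] (mod p)"
    by blast
  then have "\<not> p dvd x^2" "[a = x^2] (mod p)"
    by (auto simp: dvd_eq_mod_eq_0)
  then show "Legendre a p = 1"
    unfolding Legendre_eq_1_iff QuadRes_def by (metis cong_dvd_iff cong_sym)
next
  assume "Legendre a p = 1"
  then obtain y where "y \<in> {1..p-1}" "[y^2 = a] (mod p)"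
    by (rule Legendre_eq_1_imp_unit_root)
  then show "\<exists>x. x^2 mod p \<in> {1..p-1} \<and> [a = x^2] (mod p)"
    using mod_in_units not_dvd_power not_dvd_if_in_units cong_sym by blast
qed

lemma finite_square_roots: "finite (square_roots p a)"
  unfolding square_roots_def by (rule finite_subset[of _ "{1..p-1}"]) auto

lemma card_square_roots:
  assumes "Legendre a p = 1"
  shows "card (square_roots p a) = 2"
proof -
  obtain r where r: "r \<in> {1..p-1}" "[r^2 = a] (mod p)"
    using assms by (rule Legendre_eq_1_imp_unit_root)
  have "square_roots p a = {r, (-r) mod p}"
  proof (intro equalityI subsetI)
    fix x assume x: "x \<in> square_roots p a"
    then have "[x^2 = r^2] (mod p)"
      unfolding square_roots_def using r(2) by (metis cong_sym cong_trans mem_Collect_eq)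
    then have "[x = r] (mod p) \<or> [x = -r] (mod p)"
      by (rule cong_square_square_imp)
    moreover have "x mod p = x" "r mod p = r"
      using x r(1) unfolding square_roots_def by auto
    ultimately show "x \<in> {r, (-r) mod p}"
      unfolding cong_def by auto
  next
    fix x assume "x \<in> {r, (-r) mod p}"
    moreover have "[((-r) mod p)^2 = a] (mod p)"
      using cong_trans[OF _ r(2)] by (simp add: cong_def power_mod)
    moreover have "(-r) mod p \<in> {1..p-1}"
      using r(1) mod_in_units not_dvd_if_in_units by simp
    ultimately show "x \<in> square_roots p a"
      unfolding square_roots_def using r by auto
  qed
  moreover have "r \<noteq> (-r) mod p"
  proof
    assume "r = (-r) mod p"
    then have "[r = -r] (mod p)"
      using r(1) unfolding cong_def by simp
    then have "[2 * r = 2 * 0] (mod p)"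
      by (simp add: cong_iff_dvd_diff)
    then have "[r = 0] (mod p)"
      by (rule cong_double_imp_cong)
    then show False
      using not_dvd_if_in_units r(1) by (simp add: cong_0_iff)
  qed
  ultimately show ?thesis by simp
qed

lemma hyperbola_sum_not_dvd:
  assumes "\<not> p dvd c" "[x^2 - y^2 = c] (mod p)"
  shows "\<not> p dvd x + y"
proof
  assume "p dvd x + y"
  then have "p dvd (x + y) * (x - y)" by simp
  moreover have "(x + y) * (x - y) = x^2 - y^2"
    by (simp add: power2_eq_square algebra_simps)
  ultimately show False
    using assms cong_dvd_iff by metis
qed

lemma inj_on_sum_hyperbola:
  assumes "\<not> p dvd c"
  shows "inj_on (\<lambda>(x, y). (x + y) mod p) (hyperbola p c)"
proof (intro inj_onI, clarify)
  fix x y x' y'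
  assume xy: "(x, y) \<in> hyperbola p c" and xy': "(x', y') \<in> hyperbola p c"
    and "(x + y) mod p = (x' + y') mod p"
  then have sum: "[x + y = x' + y'] (mod p)"
    unfolding cong_def by simp
  have "[(x + y) * (x - y) = c] (mod p)" "[(x' + y') * (x' - y') = c] (mod p)"
    using xy xy' unfolding hyperbola_def by (simp_all add: power2_eq_square algebra_simps)
  then have "[(x + y) * (x - y) = (x + y) * (x' - y')] (mod p)"
    using sum by (metis cong_mult cong_refl cong_sym cong_trans)
  moreover have "coprime (x + y) p"
    using hyperbola_sum_not_dvd[OF assms] xy prime_p unfolding hyperbola_def
    by (simp add: prime_imp_coprime coprime_commute)
  ultimately have diff: "[x - y = x' - y'] (mod p)"
    using cong_mult_lcancel by blast
  have "[2 * x = 2 * x'] (mod p)" "[2 * y = 2 * y'] (mod p)"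
    using cong_add[OF sum diff] cong_diff[OF sum diff] by (simp_all add: algebra_simps)
  then show "x = x' \<and> y = y'"
    using xy xy' cong_double_imp_cong unfolding hyperbola_def
    by (auto intro: cong_less_imp_eq_int)
qed

lemma sum_hyperbola_image:
  assumes "\<not> p dvd c"
  shows "(\<lambda>(x, y). (x + y) mod p) ` hyperbola p c = {1..p-1}"
proof (intro equalityI subsetI)
  fix u assume "u \<in> (\<lambda>(x, y). (x + y) mod p) ` hyperbola p c"
  then show "u \<in> {1..p-1}"
    using hyperbola_sum_not_dvd[OF assms] mod_in_units unfolding hyperbola_def by auto
next
  fix u assume u: "u \<in> {1..p-1}"
  then have "coprime u p"
    using prime_p not_dvd_if_in_units by (simp add: prime_imp_coprime coprime_commute)
  then obtain w where "[u * w = 1] (mod p)"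
    using cong_solve_coprime_int by blast
  define v where "v = c * w"
  have uv: "[u * v = c] (mod p)"
    using cong_scalar_left[OF \<open>[u * w = 1] (mod p)\<close>, of c] unfolding v_def
    by (simp add: algebra_simps)
  define h where "h = (p + 1) div 2"
  have "2 * h = p + 1"
    using prime_odd_int[OF prime_p p_gt_2] unfolding h_def by (auto elim: oddE)
  then have h: "[2 * h = 1] (mod p)"
    by (simp add: cong_iff_dvd_diff)
  \<comment> \<open>Invert \<open>(x, y) \<mapsto> x + y\<close>: \<open>x = (u + v) / 2\<close>, \<open>y = (u - v) / 2\<close> with \<open>u v = c\<close>.\<close>
  define x where "x = ((u + v) * h) mod p"
  define y where "y = ((u - v) * h) mod p"
  have "[x^2 - y^2 = ((u + v) * h)^2 - ((u - v) * h)^2] (mod p)"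
    unfolding x_def y_def by (intro cong_diff cong_pow) simp_all
  also have "((u + v) * h)^2 - ((u - v) * h)^2 = (u * v) * (2 * h)^2"
    by (simp add: power2_eq_square algebra_simps)
  also have "[(u * v) * (2 * h)^2 = c * 1^2] (mod p)"
    using uv h by (intro cong_mult cong_pow)
  finally have "(x, y) \<in> hyperbola p c"
    unfolding hyperbola_def x_def y_def using p_gt_2 by simp
  have "[x + y = (u + v) * h + (u - v) * h] (mod p)"
    unfolding x_def y_def by (intro cong_add) simp_all
  also have "(u + v) * h + (u - v) * h = u * (2 * h)"
    by (simp add: algebra_simps)
  also have "[u * (2 * h) = u * 1] (mod p)"
    using h by (rule cong_scalar_left)
  finally have "(x + y) mod p = u"
    using u unfolding cong_def by simp
  with \<open>(x, y) \<in> hyperbola p c\<close> show "u \<in> (\<lambda>(x, y). (x + y) mod p) ` hyperbola p c"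
    by force
qed

lemma card_hyperbola:
  assumes "\<not> p dvd c"
  shows "int (card (hyperbola p c)) = p - 1"
  using card_image[OF inj_on_sum_hyperbola[OF assms]] sum_hyperbola_image[OF assms] p_gt_2
  by simp

lemma hyperbola_one_eq:
  "hyperbola p 1 = hyperbola_units p \<union> square_roots p 1 \<times> {0} \<union> {0} \<times> square_roots p (-1)"
proof -
  have neg: "[0^2 - y^2 = 1] (mod p) \<longleftrightarrow> [y^2 = -1] (mod p)" for y :: int
    using cong_minus_minus_iff[of "y^2" "-1" p] by simp
  have not_zero: "\<not> ([0 = 1] (mod p))" "\<not> ([0 = -1] (mod p))"
    using p_gt_2 by (simp_all add: cong_def zmod_minus1)
  show ?thesis
  proof (intro equalityI subsetI)
    fix z assume "z \<in> hyperbola p 1"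
    then obtain x y where z: "z = (x, y)" and range: "x \<in> {0..p-1}" "y \<in> {0..p-1}"
      and eq: "[x^2 - y^2 = 1] (mod p)"
      unfolding hyperbola_def by auto
    consider "x = 0" | "y = 0" | "x \<in> {1..p-1}" "y \<in> {1..p-1}"
      using range by fastforce
    then show "z \<in> hyperbola_units p \<union> square_roots p 1 \<times> {0} \<union> {0} \<times> square_roots p (-1)"
    proof cases
      case 1
      with eq neg have "[y^2 = -1] (mod p)" by simp
      with not_zero have "y \<noteq> 0" by auto
      with \<open>[y^2 = -1] (mod p)\<close> show ?thesis
        using z range 1 unfolding square_roots_def by auto
    next
      case 2
      with eq have "[x^2 = 1] (mod p)" by simp
      with not_zero have "x \<noteq> 0" by auto
      with \<open>[x^2 = 1] (mod p)\<close> show ?thesis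
        using z range 2 unfolding square_roots_def by auto
    next
      case 3
      then show ?thesis
        using z eq unfolding hyperbola_units_def hyperbola_def by auto
    qed
  next
    fix z assume "z \<in> hyperbola_units p \<union> square_roots p 1 \<times> {0} \<union> {0} \<times> square_roots p (-1)"
    then show "z \<in> hyperbola p 1"
      unfolding hyperbola_units_def hyperbola_def square_roots_def using neg by auto
  qed
qed

lemma card_hyperbola_units:
  assumes "Legendre (-1) p = 1"
  shows "int (card (hyperbola_units p)) = p - 5"
proof -
  have fin: "finite (hyperbola_units p)"
    unfolding hyperbola_units_def by auto
  have zero: "0 \<notin> square_roots p a" for a
    unfolding square_roots_def by simp
  have "card (hyperbola p 1)
      = card (hyperbola_units p \<union> square_roots p 1 \<times> {0}) + card ({0::int} \<times> square_roots p (-1))"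
    unfolding hyperbola_one_eq
    by (rule card_Un_disjoint) (use fin finite_square_roots zero in \<open>auto simp: hyperbola_units_def\<close>)
  also have "card (hyperbola_units p \<union> square_roots p 1 \<times> {0})
      = card (hyperbola_units p) + card (square_roots p 1)"
    by (subst card_Un_disjoint)
      (use fin finite_square_roots zero in \<open>auto simp: hyperbola_units_def card_cartesian_product\<close>)
  also have "card (square_roots p 1) = 2"
    using card_square_roots Legendre_square[of 1] p_gt_2 by simp
  also have "card ({0::int} \<times> square_roots p (-1)) = 2"
    using card_square_roots assms by (simp add: card_cartesian_product)
  finally show ?thesis
    using card_hyperbola[of 1] p_gt_2 by simp
qed

lemma hyperbola_units_eq_UN:
  "hyperbola_units p = (\<Union>s \<in> consecutive_residues p. square_roots p s \<times> square_roots p (s - 1))"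
proof (intro equalityI subsetI; clarify)
  fix x y assume "(x, y) \<in> hyperbola_units p"
  then have units: "x \<in> {1..p-1}" "y \<in> {1..p-1}" and xy: "[x^2 - y^2 = 1] (mod p)"
    unfolding hyperbola_units_def hyperbola_def by auto
  define s where "s = x^2 mod p"
  have "s \<in> {1..p-1}"
    unfolding s_def using units not_dvd_if_in_units not_dvd_power mod_in_units by blast
  have x: "[x^2 = s] (mod p)"
    unfolding s_def by simp
  have y: "[y^2 = s - 1] (mod p)"
    using cong_diff[OF x xy] by (simp add: algebra_simps)
  have "Legendre s p = 1" "Legendre (s - 1) p = 1"
    using Legendre_cong[OF x] Legendre_cong[OF y] Legendre_square units not_dvd_if_in_units
    by auto
  with \<open>s \<in> {1..p-1}\<close> x y units
  show "(x, y) \<in> (\<Union>s \<in> consecutive_residues p. square_roots p s \<times> square_roots p (s - 1))"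
    unfolding consecutive_residues_def square_roots_def by blast
next
  fix s x y
  assume "s \<in> consecutive_residues p" "x \<in> square_roots p s" "y \<in> square_roots p (s - 1)"
  then have units: "x \<in> {1..p-1}" "y \<in> {1..p-1}"
    and "[x^2 = s] (mod p)" "[y^2 = s - 1] (mod p)"
    unfolding square_roots_def by auto
  then have "[x^2 - y^2 = s - (s - 1)] (mod p)"
    by (intro cong_diff)
  with units show "(x, y) \<in> hyperbola_units p"
    unfolding hyperbola_units_def hyperbola_def by auto
qed

lemma card_hyperbola_units_eq: "card (hyperbola_units p) = 4 * card (consecutive_residues p)"
proof -
  have "finite (consecutive_residues p)"
    unfolding consecutive_residues_def by (rule finite_subset[of _ "{1..p-1}"]) auto
  moreover have "square_roots p s \<inter> square_roots p s' = {}"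
    if "s \<in> consecutive_residues p" "s' \<in> consecutive_residues p" "s \<noteq> s'" for s s'
  proof -
    have "[s = s'] (mod p)" if "[x^2 = s] (mod p)" "[x^2 = s'] (mod p)" for x
      using that cong_sym cong_trans by blast
    then show ?thesis
      using that cong_less_imp_eq_int
      unfolding consecutive_residues_def square_roots_def by fastforce
  qed
  ultimately have "card (hyperbola_units p)
      = (\<Sum>s \<in> consecutive_residues p. card (square_roots p s \<times> square_roots p (s - 1)))"
    unfolding hyperbola_units_eq_UN by (intro card_UN_disjoint) (auto simp: finite_square_roots)
  also have "\<dots> = (\<Sum>s \<in> consecutive_residues p. 4)"
    by (intro sum.cong refl)
      (simp add: card_cartesian_product card_square_roots consecutive_residues_def)
  finally show ?thesis by simp
qed

lemma fourth_power_cong: "[s = t] (mod p) \<Longrightarrow> fourth_power p s \<longleftrightarrow> fourth_power p t"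
  unfolding fourth_power_def by (meson cong_sym cong_trans)

lemma fourth_power_if_square_of_residue:
  assumes "Legendre x p = 1" "[x^2 = t] (mod p)"
  shows "fourth_power p t"
proof -
  obtain w where "w \<in> {1..p-1}" "[w^2 = x] (mod p)"
    using assms(1) by (rule Legendre_eq_1_imp_unit_root)
  moreover from \<open>[w^2 = x] (mod p)\<close> have "[(w^2)^2 = x^2] (mod p)"
    by (rule cong_pow)
  ultimately show ?thesis
    unfolding fourth_power_def using assms(2)
    by (metis cong_trans numeral_Bit0 power_add power2_eq_square)
qed

lemma Legendre_fourth_power: "fourth_power p t \<Longrightarrow> Legendre t p = 1"
proof -
  assume "fourth_power p t"
  then obtain y where "y \<in> {1..p-1}" "[(y^2)^2 = t] (mod p)"
    unfolding fourth_power_def by (auto simp flip: power_mult)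
  then show ?thesis
    using Legendre_cong Legendre_square not_dvd_power not_dvd_if_in_units by metis
qed

text \<open>Under these assumptions \<open>-1\<close> is a square but not a fourth power, i.e.\ \<open>p mod 8 = 5\<close>.\<close>

context
  fixes e :: int
  assumes e_square: "[e^2 = -1] (mod p)" and e_nonresidue: "Legendre e p = -1"
begin

lemma Legendre_minus_one: "Legendre (-1) p = 1"
proof -
  have "\<not> p dvd e"
    using e_nonresidue unfolding Legendre_def by (auto simp: cong_0_iff)
  then show ?thesis
    using Legendre_cong[OF e_square] Legendre_square by simp
qed

lemma Legendre_uminus: "Legendre (-a) p = Legendre a p"
  using Legendre_mult[of "-1" a] Legendre_minus_one by simp

lemma Legendre_p_minus: "Legendre (p - a) p = Legendre a p"
  using Legendre_cong[of "p - a" "-a"] Legendre_uminus by (simp add: cong_iff_dvd_diff)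

lemma fourth_power_or_uminus:
  assumes "Legendre s p = 1"
  shows "fourth_power p s \<or> fourth_power p (-s)"
proof -
  obtain x where x: "x \<in> {1..p-1}" "[x^2 = s] (mod p)"
    using assms by (rule Legendre_eq_1_imp_unit_root)
  consider "Legendre x p = 1" | "Legendre x p = -1"
    using Legendre_nonzero_cases not_dvd_if_in_units x(1) by blast
  then show ?thesis
  proof cases
    case 1
    then show ?thesis
      using fourth_power_if_square_of_residue x(2) by blast
  next
    case 2
    then have "Legendre (e * x) p = 1"
      using Legendre_mult e_nonresidue by simp
    moreover have "[(e * x)^2 = -1 * s] (mod p)"
      unfolding power_mult_distrib using e_square x(2) by (rule cong_mult)
    ultimately show ?thesis
      using fourth_power_if_square_of_residue by auto
  qed
qed

lemma not_fourth_power_and_uminus: "\<not> (fourth_power p t \<and> fourth_power p (-t))"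
proof
  assume "fourth_power p t \<and> fourth_power p (-t)"
  then obtain y z where y: "y \<in> {1..p-1}" "[(y^2)^2 = t] (mod p)"
    and z: "z \<in> {1..p-1}" "[(z^2)^2 = -t] (mod p)"
    unfolding fourth_power_def by (auto simp flip: power_mult)
  have "[(e * y^2)^2 = -1 * t] (mod p)"
    unfolding power_mult_distrib using e_square y(2) by (rule cong_mult)
  then have "[(z^2)^2 = (e * y^2)^2] (mod p)"
    using z(2) by (metis cong_sym cong_trans mult_minus1)
  then have "[z^2 = e * y^2] (mod p) \<or> [z^2 = -(e * y^2)] (mod p)"
    by (rule cong_square_square_imp)
  moreover have "Legendre (z^2) p = 1"
    using Legendre_square not_dvd_if_in_units z(1) by blast
  moreover have "Legendre (e * y^2) p = -1" "Legendre (-(e * y^2)) p = -1"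
    using Legendre_mult Legendre_uminus e_nonresidue Legendre_square not_dvd_if_in_units y(1)
    by simp_all
  ultimately show False
    using Legendre_cong by force
qed

lemma card_consecutive_residues:
  "card (consecutive_residues p)
     = card {t \<in> {1..p-1}. fourth_power p t \<and> Legendre (t - 1) p = 1}
       + card {t \<in> {1..p-1}. fourth_power p t \<and> Legendre (t + 1) p = 1}"
  (is "_ = card ?A + card ?B")
proof -
  have p_minus: "[p - t = -t] (mod p)" for t
    by (simp add: cong_iff_dvd_diff)
  have "consecutive_residues p = ?A \<union> (\<lambda>t. p - t) ` ?B"
  proof (intro equalityI subsetI)
    fix s assume "s \<in> consecutive_residues p"
    then have s: "s \<in> {1..p-1}" "Legendre s p = 1" "Legendre (s - 1) p = 1"
      unfolding consecutive_residues_def by auto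
    from fourth_power_or_uminus[OF s(2)] show "s \<in> ?A \<union> (\<lambda>t. p - t) ` ?B"
    proof
      assume "fourth_power p s"
      with s show ?thesis by blast
    next
      assume "fourth_power p (-s)"
      moreover have "Legendre (p - s + 1) p = 1"
        using Legendre_p_minus[of "s - 1"] s(3) by (simp add: algebra_simps)
      ultimately have "p - s \<in> ?B"
        using s(1) fourth_power_cong[OF p_minus] by auto
      then show ?thesis by force
    qed
  next
    fix s assume "s \<in> ?A \<union> (\<lambda>t. p - t) ` ?B"
    then show "s \<in> consecutive_residues p"
    proof
      assume "s \<in> ?A"
      then show ?thesis
        unfolding consecutive_residues_def using Legendre_fourth_power by blast
    next
      assume "s \<in> (\<lambda>t. p - t) ` ?B"
      then obtain t where t: "t \<in> {1..p-1}" "fourth_power p t" "Legendre (t + 1) p = 1"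
        and "s = p - t"
        by blast
      moreover have "Legendre (p - t - 1) p = 1"
        using Legendre_p_minus[of "t + 1"] t(3) by (simp add: algebra_simps)
      ultimately show ?thesis
        unfolding consecutive_residues_def
        using Legendre_p_minus Legendre_fourth_power by auto
    qed
  qed
  moreover have "?A \<inter> (\<lambda>t. p - t) ` ?B = {}"
    using not_fourth_power_and_uminus fourth_power_cong[OF p_minus] by auto
  moreover have "finite ?A" "finite ?B"
    by (rule finite_subset[of _ "{1..p-1}"]; auto)+
  moreover have "inj_on (\<lambda>t. p - t) ?B"
    by (rule inj_onI) simp
  ultimately show ?thesis
    by (simp add: card_Un_disjoint card_image)
qed

end

end

theorem lemma6:
  fixes p d \<epsilon> :: int
  assumes "prime p" and "p > 2" and "d > 0"
    and "(-1) mod p \<in> QR p"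
    and "\<epsilon> \<in> {1..p-1}" and "[\<epsilon>^2 = -1] (mod p)" and "\<epsilon> \<in> QNR p"
  shows "real (n1 p + n2 p) = (real_of_int p - 5) / 4"
proof -
  \<comment> \<open>\<open>d > 0\<close> is irrelevant, and \<open>-1 \<in> QR\<^sub>p\<close> already follows from \<open>\<epsilon>\<^sup>2 = -1\<close>.\<close>
  note prime = assms(1,2)
  have "\<epsilon> \<in> {1..p-1}" "Legendre \<epsilon> p \<noteq> 1"
    using assms(5,7) QR_iff_Legendre[OF prime, of \<epsilon>] unfolding QNR_def by auto
  then have \<epsilon>: "Legendre \<epsilon> p = -1"
    using Legendre_nonzero_cases[OF prime] not_dvd_if_in_units[OF prime] by blast
  have "n1 p + n2 p = card (consecutive_residues p)"
    unfolding n1_def n2_def nonzero_square_cong_iff_Legendre[OF prime]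
    using card_consecutive_residues[OF prime assms(6) \<epsilon>] by (simp add: fourth_power_def)
  moreover have "card (hyperbola_units p) = 4 * card (consecutive_residues p)"
    by (rule card_hyperbola_units_eq[OF prime])
  moreover have "int (card (hyperbola_units p)) = p - 5"
    using card_hyperbola_units[OF prime Legendre_minus_one[OF prime assms(6) \<epsilon>]] .
  ultimately have "int (n1 p + n2 p) * 4 = p - 5"
    by simp
  then have "real (n1 p + n2 p) * 4 = real_of_int p - 5"
    by (metis of_int_diff of_int_mult of_int_numeral of_int_of_nat_eq)
  then show ?thesis
    by simp
qed

end
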